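(* Let $\varepsilon, D>0$. Let $(X_1,d_1)$ and $(X_2,d_2)$ be compact length spaces with closed measurement sets $S_1\subset X_1$ and $S_2\subset X_2$. Suppose that $\operatorname{diam}(X_1),\operatorname{diam}(X_2)<D$ and that both $(X_1,d_1)$ with $S_1$ and $(X_2,d_2)$ with $S_2$ are $\mathrm{BLIE}_\varepsilon$. If there is a homeomorphism $\phi\colon S_1\to S_2$, then \[ d_{GH}\big((X_1,d_1),(X_2,d_2)\big)\le \Big(\frac{2D}{\varepsilon}+1\Big)\, d^{H}_{C(S_1)}\big(\mathcal R_{X_1,S_1}(X_1),\mathcal R_{X_2,S_2,\phi}(X_2)\big). \] In particular, if the travel time data of $X_1$ and $X_2$ coincide, then $(X_1,d_1)$ and $(X_2,d_2)$ are isometric.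
   Context: A length space is a metric space $(X,d)$ in which $d(x,y)$ equals the infimum of the lengths $L(\gamma)=\sup\sum_i d(\gamma(t_{i-1}),\gamma(t_i))$ (supremum over partitions) of curves $\gamma$ from $x$ to $y$. For a compact length space $(X,d)$ and closed $S\subset X$, the travel time map is $\mathcal R_{X,S}\colon (X,d)\to (C(S),\|\cdot\|_\infty)$, $\mathcal R_{X,S}(p)=r_p$ with $r_p(z)=d(p,z)$ for $z\in S$; its image $\mathcal R_{X,S}(X)$ is the travel time data. A continuous map $f\colon (X,d_X)\to(Y,d_Y)$ is an $\varepsilon$-local isometry if $d_Y(f(p),f(q))=d_X(p,q)$ whenever $d_X(p,q)<\varepsilon$. $(X,d)$ with measurement set $S$ is $\mathrm{BLIE}_\varepsilon$ if $\mathcal R_{X,S}$ is a topological embedding and $\mathcal R_{X,S}^{-1}\colon(\mathcal R_{X,S}(X),\|\cdot\|_\infty)\to (X,d)$ is an $\varepsilon$-local isometry. For a homeomorphism $\phi\colon S_1\to S_2$, $\mathcal R_{X_2,S_2,\phi}(X_2):=\{d_2(q,\phi(\cdot))\colon S_1\to\mathbb R \mid q\in X_2\}\subset C(S_1)$. $d^H_{C(S_1)}$ is the Hausdorff distance in $(C(S_1),\|\cdot\|_\infty)$ and $d_{GH}$ the Gromov–Hausdorff distance. The travel time data of $X_1,X_2$ coincide if $d^H_{C(S_1)}(\mathcal R_{X_1,S_1}(X_1),\mathcal R_{X_2,S_2,\phi}(X_2))=0$ for some homeomorphism $\phi\colon S_1\to S_2$. *)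

theory Defs
  imports "HOL-Analysis.Analysis"
begin

abbreviation mtop :: "'a set \<Rightarrow> ('a \<Rightarrow> 'a \<Rightarrow> real) \<Rightarrow> 'a topology" where
  "mtop X d \<equiv> Metric_space.mtopology X d"

definition curve_length :: "('a \<Rightarrow> 'a \<Rightarrow> real) \<Rightarrow> (real \<Rightarrow> 'a) \<Rightarrow> ereal" where
  "curve_length d \<gamma> =
     (SUP nt \<in> {(n::nat, t::nat \<Rightarrow> real). t 0 = 0 \<and> t n = 1 \<and> (\<forall>i<n. t i \<le> t (Suc i))}.
        ereal (\<Sum>i<fst nt. d (\<gamma> (snd nt i)) (\<gamma> (snd nt (Suc i)))))"

definition curves_between :: "'a set \<Rightarrow> ('a \<Rightarrow> 'a \<Rightarrow> real) \<Rightarrow> 'a \<Rightarrow> 'a \<Rightarrow> (real \<Rightarrow> 'a) set" where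
  "curves_between X d x y =
     {\<gamma>. continuous_map (top_of_set {0..1}) (mtop X d) \<gamma> \<and> \<gamma> 0 = x \<and> \<gamma> 1 = y}"

definition length_space :: "'a set \<Rightarrow> ('a \<Rightarrow> 'a \<Rightarrow> real) \<Rightarrow> bool" where
  "length_space X d \<longleftrightarrow> Metric_space X d \<and>
     (\<forall>x\<in>X. \<forall>y\<in>X. ereal (d x y) = (INF \<gamma> \<in> curves_between X d x y. curve_length d \<gamma>))"

definition mdiam :: "'a set \<Rightarrow> ('a \<Rightarrow> 'a \<Rightarrow> real) \<Rightarrow> ereal" where
  "mdiam X d = (SUP x\<in>X. SUP y\<in>X. ereal (d x y))"

definition hausdorff_dist :: "('b \<Rightarrow> 'b \<Rightarrow> real) \<Rightarrow> 'b set \<Rightarrow> 'b set \<Rightarrow> ereal" where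
  "hausdorff_dist d A B =
     max (SUP a\<in>A. INF b\<in>B. ereal (d a b)) (SUP b\<in>B. INF a\<in>A. ereal (d a b))"

definition GH_dist :: "'a set \<Rightarrow> ('a \<Rightarrow> 'a \<Rightarrow> real) \<Rightarrow> 'b set \<Rightarrow> ('b \<Rightarrow> 'b \<Rightarrow> real) \<Rightarrow> ereal" where
  "GH_dist X1 d1 X2 d2 =
     (INF d \<in> {d. Metric_space (Inl ` X1 \<union> Inr ` X2) d
                \<and> (\<forall>x\<in>X1. \<forall>y\<in>X1. d (Inl x) (Inl y) = d1 x y)
                \<and> (\<forall>x\<in>X2. \<forall>y\<in>X2. d (Inr x) (Inr y) = d2 x y)}.
        hausdorff_dist d (Inl ` X1) (Inr ` X2))"

definition isometric :: "'a set \<Rightarrow> ('a \<Rightarrow> 'a \<Rightarrow> real) \<Rightarrow> 'b set \<Rightarrow> ('b \<Rightarrow> 'b \<Rightarrow> real) \<Rightarrow> bool" where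
  "isometric X1 d1 X2 d2 \<longleftrightarrow>
     (\<exists>f. bij_betw f X1 X2 \<and> (\<forall>x\<in>X1. \<forall>y\<in>X1. d2 (f x) (f y) = d1 x y))"

text \<open>Continuous real functions on the topological space T, represented extensionally
  (value undefined outside topspace T).\<close>
definition Cfun :: "'a topology \<Rightarrow> ('a \<Rightarrow> real) set" where
  "Cfun T = {f. continuous_map T euclideanreal f \<and> f \<in> extensional (topspace T)}"

text \<open>Sup-norm distance on functions on S (0 for S empty).\<close>
definition sup_dist :: "'a set \<Rightarrow> ('a \<Rightarrow> real) \<Rightarrow> ('a \<Rightarrow> real) \<Rightarrow> real" where
  "sup_dist S f g = Sup (insert 0 ((\<lambda>z. \<bar>f z - g z\<bar>) ` S))"

definition travel_time_map :: "('a \<Rightarrow> 'a \<Rightarrow> real) \<Rightarrow> 'a set \<Rightarrow> 'a \<Rightarrow> ('a \<Rightarrow> real)" where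
  "travel_time_map d S p = restrict (\<lambda>z. d p z) S"

definition travel_time_data :: "'a set \<Rightarrow> ('a \<Rightarrow> 'a \<Rightarrow> real) \<Rightarrow> 'a set \<Rightarrow> ('a \<Rightarrow> real) set" where
  "travel_time_data X d S = travel_time_map d S ` X"

definition travel_time_data_phi ::
  "'b set \<Rightarrow> ('b \<Rightarrow> 'b \<Rightarrow> real) \<Rightarrow> 'a set \<Rightarrow> ('a \<Rightarrow> 'b) \<Rightarrow> ('a \<Rightarrow> real) set" where
  "travel_time_data_phi X2 d2 S1 \<phi> = (\<lambda>q. restrict (\<lambda>z. d2 q (\<phi> z)) S1) ` X2"

definition local_isometry ::
  "real \<Rightarrow> 'a set \<Rightarrow> ('a \<Rightarrow> 'a \<Rightarrow> real) \<Rightarrow> 'b set \<Rightarrow> ('b \<Rightarrow> 'b \<Rightarrow> real) \<Rightarrow> ('a \<Rightarrow> 'b) \<Rightarrow> bool" where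
  "local_isometry \<epsilon> A dA B dB f \<longleftrightarrow>
     continuous_map (mtop A dA) (mtop B dB) f \<and>
     (\<forall>p\<in>A. \<forall>q\<in>A. dA p q < \<epsilon> \<longrightarrow> dB (f p) (f q) = dA p q)"

definition BLIE :: "real \<Rightarrow> 'a set \<Rightarrow> ('a \<Rightarrow> 'a \<Rightarrow> real) \<Rightarrow> 'a set \<Rightarrow> bool" where
  "BLIE \<epsilon> X d S \<longleftrightarrow>
     embedding_map (mtop X d) (mtop (Cfun (subtopology (mtop X d) S)) (sup_dist S))
       (travel_time_map d S) \<and>
     local_isometry \<epsilon> (travel_time_data X d S) (sup_dist S) X d
       (inv_into X (travel_time_map d S))"

end

theory Submission
  imports Defs
begin

text \<open>Fix \<open>\<delta>\<close> above the Hausdorff distance of the travel time data and relate \<open>p \<in> X1\<close>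
  to \<open>q \<in> X2\<close> when \<open>r\<^sub>p\<close> and \<open>r\<^sub>q \<circ> \<phi>\<close> are \<open>\<delta>\<close>-close on \<open>S1\<close>; this is a correspondence.
  For related pairs with \<open>d1 p p' < \<epsilon>/2\<close> and \<open>4 \<delta> \<le> \<epsilon>\<close> the travel time functions of \<open>q\<close>
  and \<open>q'\<close> differ by less than \<open>\<epsilon>\<close> on \<open>S2\<close>, so the BLIE property of \<open>X2\<close> gives
  \<open>d2 q q' \<le> d1 p p' + 2 \<delta>\<close>, and symmetrically. Cutting an almost geodesic of length \<open>< D\<close>
  into at most \<open>2 D / \<epsilon> + 1\<close> pieces shorter than \<open>\<epsilon>/2\<close> adds up these errors: the
  correspondence has distortion at most \<open>2 (2 D / \<epsilon> + 1) \<delta>\<close>, and gluing \<open>X1\<close> and \<open>X2\<close>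
  along it bounds their Gromov--Hausdorff distance by half of that. If the data coincide,
  compactness makes the correspondence exact at \<open>\<delta> = 0\<close>, where its distortion vanishes,
  so it is the graph of an isometry.\<close>

section \<open>Length spaces\<close>

lemma (in Metric_space) continuous_map_dist_point:
  "a \<in> M \<Longrightarrow> continuous_map mtopology euclideanreal (d a)"
  using continuous_on_mdist[of a "metric (M, d)"] by (simp add: mtopology_of_def)

lemma mdiam_less_imp_dist_less:
  assumes "x \<in> X" "y \<in> X" "mdiam X d < ereal D"
  shows "d x y < D"
proof -
  have "ereal (d x y) \<le> mdiam X d"
    unfolding mdiam_def using assms by (intro SUP_upper2[of x] SUP_upper2[of y]) auto
  from order.strict_trans1[OF this assms(3)] show ?thesis by simp
qed

text \<open>The partition \<open>0 \<le> s \<le> 1\<close> of an almost minimizing curve shows that its point \<open>\<gamma> s\<close> at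
  distance \<open>t\<close> from \<open>x\<close> is almost on a geodesic.\<close>
lemma length_space_point_at_distance:
  assumes LS: "length_space X d" and x: "x \<in> X" and y: "y \<in> X"
    and t: "0 \<le> t" "t \<le> d x y" and \<eta>: "\<eta> > 0"
  shows "\<exists>z\<in>X. d x z = t \<and> d z y \<le> d x y - t + \<eta>"
proof -
  have ms: "Metric_space X d" using LS length_space_def by blast
  have eq: "ereal (d x y) = (INF \<gamma> \<in> curves_between X d x y. curve_length d \<gamma>)"
    using LS x y unfolding length_space_def by blast
  have "(INF \<gamma> \<in> curves_between X d x y. curve_length d \<gamma>) < ereal (d x y + \<eta>)"
    unfolding eq[symmetric] using \<eta> by simp
  then obtain \<gamma> where "\<gamma> \<in> curves_between X d x y" and len: "curve_length d \<gamma> < ereal (d x y + \<eta>)"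
    by (auto simp: INF_less_iff)
  then have cm: "continuous_map (top_of_set {0..1}) (mtop X d) \<gamma>" and "\<gamma> 0 = x" "\<gamma> 1 = y"
    unfolding curves_between_def by auto
  have "continuous_on {0..1} (\<lambda>s. d x (\<gamma> s))"
    using continuous_map_compose[OF cm Metric_space.continuous_map_dist_point[OF ms x]]
    by (simp add: o_def)
  moreover have "d x (\<gamma> 0) = 0" using x ms \<open>\<gamma> 0 = x\<close> by (simp add: Metric_space.zero)
  ultimately obtain s where s: "0 \<le> s" "s \<le> 1" "d x (\<gamma> s) = t"
    using IVT'[of "\<lambda>s. d x (\<gamma> s)" 0 t 1] \<open>\<gamma> 1 = y\<close> t by auto
  have zX: "\<gamma> s \<in> X"
    using cm s unfolding continuous_map_def by (auto simp: Metric_space.topspace_mtopology[OF ms])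
  define p where "p = (\<lambda>i::nat. if i = 0 then 0 else if i = 1 then s else (1::real))"
  have "(2::nat, p) \<in> {(n, t). t 0 = 0 \<and> t n = 1 \<and> (\<forall>i<n. t i \<le> t (Suc i))}"
    using s by (auto simp: p_def less_Suc_eq numeral_2_eq_2)
  then have "ereal (\<Sum>i<fst (2::nat, p). d (\<gamma> (snd (2::nat, p) i)) (\<gamma> (snd (2::nat, p) (Suc i))))
      \<le> curve_length d \<gamma>"
    unfolding curve_length_def by (rule SUP_upper)
  then have "ereal (d x (\<gamma> s) + d (\<gamma> s) y) \<le> curve_length d \<gamma>"
    by (simp add: p_def numeral_2_eq_2 \<open>\<gamma> 0 = x\<close> \<open>\<gamma> 1 = y\<close>)
  from order.strict_trans1[OF this len] have "d x (\<gamma> s) + d (\<gamma> s) y < d x y + \<eta>" by simp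
  then show ?thesis using zX s by (intro bexI[of _ "\<gamma> s"]) auto
qed

text \<open>Split off a first step of length just below \<open>a\<close> along an almost geodesic.\<close>
lemma length_space_chain_bound:
  assumes LS: "length_space X d" and ms: "Metric_space Y e"
    and tot: "\<forall>x\<in>X. \<exists>y\<in>Y. P x y" and a: "a > 0" and c: "c \<ge> 0"
    and step: "\<And>x y x' y'. \<lbrakk>x \<in> X; x' \<in> X; y \<in> Y; y' \<in> Y; P x y; P x' y'; d x x' < a\<rbrakk>
                 \<Longrightarrow> e y y' \<le> d x x' + c"
    and "x \<in> X" "x' \<in> X" "y \<in> Y" "y' \<in> Y" "P x y" "P x' y'" "d x x' < real n * a"
  shows "e y y' \<le> d x x' + real n * c"
  using assms(7-)
proof (induction n arbitrary: x y)
  case 0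
  then have "d x x' < 0" by simp
  then show ?case using LS Metric_space.nonneg by (metis length_space_def not_less)
next
  case (Suc n)
  show ?case
  proof (cases "d x x' < a")
    case True
    then have "e y y' \<le> d x x' + c" using step[OF Suc.prems(1-6)] by simp
    moreover have "real n * c \<ge> 0" using c by simp
    ultimately show ?thesis by (simp add: distrib_right)
  next
    case False
    define g where "g = real (Suc n) * a - d x x'"
    have g: "g > 0" using Suc.prems(7) g_def by simp
    have Suc_mult: "real (Suc n) * r = r + real n * r" for r by (simp add: distrib_right)
    have g_eq: "d x x' + g = a + real n * a" using g_def Suc_mult[of a] by simp
    define t where "t = a - min (a/2) (g/4)"
    have t: "0 \<le> t" "t \<le> d x x'" "t < a" using False a g unfolding t_def by auto
    show ?thesis
    proof (rule field_le_epsilon)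
      fix \<eta> :: real assume "\<eta> > 0"
      then have "min (g/4) \<eta> > 0" using g by simp
      then obtain z where z: "z \<in> X" "d x z = t" "d z x' \<le> d x x' - t + min (g/4) \<eta>"
        using length_space_point_at_distance[OF LS Suc.prems(1,2) t(1,2)] by blast
      then obtain w where w: "w \<in> Y" "P z w" using tot by blast
      have "e y w \<le> t + c" using step[OF Suc.prems(1) z(1) Suc.prems(3) w(1) Suc.prems(5) w(2)] z t by simp
      moreover have "d z x' < real n * a"
        using z(3) g g_eq min.cobounded1[of "g/4" \<eta>] min.cobounded2[of "a/2" "g/4"]
        unfolding t_def by linarith
      then have "e w y' \<le> d z x' + real n * c"
        using Suc.IH[OF z(1) Suc.prems(2) w(1) Suc.prems(4) w(2) Suc.prems(6)] by simp
      moreover have "e y y' \<le> e y w + e w y'"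
        using Metric_space.triangle[OF ms Suc.prems(3) w(1) Suc.prems(4)] .
      ultimately show "e y y' \<le> d x x' + real (Suc n) * c + \<eta>"
        using z(3) min.cobounded2[of "g/4" \<eta>] Suc_mult[of c] by linarith
    qed
  qed
qed

lemma ex_nat_multiple_greater:
  fixes r D a :: real
  assumes "0 \<le> r" "r < D" "a > 0"
  shows "\<exists>n::nat. r < real n * a \<and> real n \<le> D / a + 1"
proof (intro exI conjI)
  have "0 \<le> r / a" using assms by simp
  then have n: "real (nat \<lfloor>r / a\<rfloor> + 1) = of_int \<lfloor>r / a\<rfloor> + 1" by simp
  show "r < real (nat \<lfloor>r / a\<rfloor> + 1) * a"
    using n real_of_int_floor_add_one_gt[of "r / a"] assms(3) by (simp add: field_simps)
  have "r / a \<le> D / a" using assms by (simp add: divide_right_mono)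
  then show "real (nat \<lfloor>r / a\<rfloor> + 1) \<le> D / a + 1" using n of_int_floor_le[of "r / a"] by linarith
qed

section \<open>Hausdorff and sup distances\<close>

lemma hausdorff_dist_less_imp_left:
  assumes "hausdorff_dist dd A B < ereal \<delta>" "a \<in> A"
  shows "\<exists>b\<in>B. dd a b < \<delta>"
proof -
  have "(INF b\<in>B. ereal (dd a b)) \<le> hausdorff_dist dd A B"
    unfolding hausdorff_dist_def using assms(2) by (intro max.coboundedI1 SUP_upper)
  with assms(1) show ?thesis by (auto simp: INF_less_iff dest: order.strict_trans1)
qed

lemma hausdorff_dist_less_imp_right:
  assumes "hausdorff_dist dd A B < ereal \<delta>" "b \<in> B"
  shows "\<exists>a\<in>A. dd a b < \<delta>"
proof -
  have "(INF a\<in>A. ereal (dd a b)) \<le> hausdorff_dist dd A B"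
    unfolding hausdorff_dist_def using assms(2) by (intro max.coboundedI2 SUP_upper)
  with assms(1) show ?thesis by (auto simp: INF_less_iff dest: order.strict_trans1)
qed

text \<open>Without the boundedness hypothesis the supremum in \<open>sup_dist\<close> is unspecified.\<close>
lemma sup_dist_less_imp:
  assumes "bdd_above ((\<lambda>z. \<bar>f z - g z\<bar>) ` S)" "sup_dist S f g < \<delta>"
  shows "\<delta> > 0" and "\<forall>z\<in>S. \<bar>f z - g z\<bar> \<le> \<delta>"
proof -
  have "0 \<le> sup_dist S f g" and "\<forall>z\<in>S. \<bar>f z - g z\<bar> \<le> sup_dist S f g"
    unfolding sup_dist_def using assms(1) by (auto intro: cSup_upper)
  with assms(2) show "\<delta> > 0" and "\<forall>z\<in>S. \<bar>f z - g z\<bar> \<le> \<delta>" by fastforce+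
qed

lemma sup_dist_le:
  assumes "0 \<le> b" "\<forall>z\<in>S. \<bar>f z - g z\<bar> \<le> b"
  shows "sup_dist S f g \<le> b"
  unfolding sup_dist_def using assms by (intro cSup_least) auto

lemma ereal_le_mult_if_le_all_greater:
  fixes G H :: ereal and K :: real
  assumes K: "K > 0" and le: "\<And>\<delta>. H < ereal \<delta> \<Longrightarrow> G \<le> ereal (K * \<delta>)"
  shows "G \<le> ereal K * H"
proof (cases H)
  case (real h)
  show ?thesis
  proof (rule ereal_le_epsilon2)
    fix e :: real assume "e > 0"
    then have "G \<le> ereal (K * (h + e / K))" using le real K by simp
    also have "K * (h + e / K) = K * h + e" using K by (simp add: field_simps)
    finally show "G \<le> ereal K * H + ereal e" using real by simp
  qed
next
  case PInf
  then show ?thesis using K by simp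
next
  case MInf
  then have "G = -\<infinity>" using le[of "_ / K"] K by (intro ereal_bot) simp
  then show ?thesis by simp
qed

section \<open>Correspondences and the Gromov--Hausdorff distance\<close>

locale correspondence =
  fixes X1 :: "'a set" and d1 and X2 :: "'b set" and d2 and R and r :: real
  assumes ms1: "Metric_space X1 d1" and ms2: "Metric_space X2 d2"
    and R: "R \<subseteq> X1 \<times> X2" and total1: "\<forall>x\<in>X1. \<exists>y. (x, y) \<in> R" and total2: "\<forall>y\<in>X2. \<exists>x. (x, y) \<in> R"
    and r: "r > 0" and nonempty: "X1 \<noteq> {}"
    and distortion: "\<And>x y x' y'. (x, y) \<in> R \<Longrightarrow> (x', y') \<in> R \<Longrightarrow> \<bar>d1 x x' - d2 y y'\<bar> \<le> 2 * r"
begin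

definition glue_dist :: "'a \<Rightarrow> 'b \<Rightarrow> real" where
  "glue_dist x y = r + (INF (a, b)\<in>R. d1 x a + d2 b y)"

lemma glue_inf_lower: "(a, b) \<in> R \<Longrightarrow> (INF (a, b)\<in>R. d1 x a + d2 b y) \<le> d1 x a + d2 b y"
  using Metric_space.nonneg[OF ms1] Metric_space.nonneg[OF ms2]
  by (intro cInf_lower bdd_belowI[of _ 0]) (auto intro: add_nonneg_nonneg)

lemma glue_inf_greatest:
  "(\<And>a b. (a, b) \<in> R \<Longrightarrow> m \<le> d1 x a + d2 b y) \<Longrightarrow> m \<le> (INF (a, b)\<in>R. d1 x a + d2 b y)"
  using nonempty total1 by (intro cInf_greatest) auto

lemma glue_dist_pos: "glue_dist x y > 0"
proof -
  have "0 \<le> (INF (a, b)\<in>R. d1 x a + d2 b y)"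
    using Metric_space.nonneg[OF ms1] Metric_space.nonneg[OF ms2]
    by (intro glue_inf_greatest add_nonneg_nonneg)
  then show ?thesis using r unfolding glue_dist_def by simp
qed

lemma glue_dist_le_left:
  assumes "x \<in> X1" "x' \<in> X1"
  shows "glue_dist x y \<le> d1 x x' + glue_dist x' y"
proof -
  have "(INF (a, b)\<in>R. d1 x a + d2 b y) - d1 x x' \<le> (INF (a, b)\<in>R. d1 x' a + d2 b y)"
  proof (rule glue_inf_greatest)
    fix a b assume ab: "(a, b) \<in> R"
    then have "d1 x a \<le> d1 x x' + d1 x' a" using Metric_space.triangle[OF ms1] assms R by blast
    then show "(INF (a, b)\<in>R. d1 x a + d2 b y) - d1 x x' \<le> d1 x' a + d2 b y"
      using glue_inf_lower[OF ab, of x y] by simp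
  qed
  then show ?thesis unfolding glue_dist_def by simp
qed

lemma glue_dist_le_right:
  assumes "y \<in> X2" "y' \<in> X2"
  shows "glue_dist x y' \<le> glue_dist x y + d2 y y'"
proof -
  have "(INF (a, b)\<in>R. d1 x a + d2 b y') - d2 y y' \<le> (INF (a, b)\<in>R. d1 x a + d2 b y)"
  proof (rule glue_inf_greatest)
    fix a b assume ab: "(a, b) \<in> R"
    then have "d2 b y' \<le> d2 b y + d2 y y'" using Metric_space.triangle[OF ms2] assms R by blast
    then show "(INF (a, b)\<in>R. d1 x a + d2 b y') - d2 y y' \<le> d1 x a + d2 b y"
      using glue_inf_lower[OF ab, of x y'] by simp
  qed
  then show ?thesis unfolding glue_dist_def by simp
qed

lemma glue_dist_le_left':
  assumes "x \<in> X1" "x' \<in> X1"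
  shows "glue_dist x' y \<le> glue_dist x y + d1 x x'"
  using glue_dist_le_left[OF assms(2,1), of y] Metric_space.commute[OF ms1, of x' x] by linarith

lemma glue_dist_le_right':
  assumes "y \<in> X2" "y' \<in> X2"
  shows "glue_dist x y \<le> d2 y y' + glue_dist x y'"
  using glue_dist_le_right[OF assms(2,1), of x] Metric_space.commute[OF ms2, of y' y] by linarith

text \<open>The two triangle inequalities through the other space are where the distortion bound enters.\<close>
lemma dist1_le_glue_dist:
  assumes "x \<in> X1" "x' \<in> X1" "y \<in> X2"
  shows "d1 x x' \<le> glue_dist x y + glue_dist x' y"
proof -
  have "d1 x x' - 2 * r - (INF (a, b)\<in>R. d1 x' a + d2 b y) \<le> (INF (a, b)\<in>R. d1 x a + d2 b y)"
  proof (rule glue_inf_greatest)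
    fix a b assume ab: "(a, b) \<in> R"
    have "d1 x x' - 2 * r - d1 x a - d2 b y \<le> (INF (a, b)\<in>R. d1 x' a + d2 b y)"
    proof (rule glue_inf_greatest)
      fix a' b' assume ab': "(a', b') \<in> R"
      have m: "a \<in> X1" "b \<in> X2" "a' \<in> X1" "b' \<in> X2" using R ab ab' by auto
      have "d1 x x' \<le> d1 x a + d1 a x'" "d1 a x' \<le> d1 a a' + d1 a' x'"
        using Metric_space.triangle[OF ms1] assms m by blast+
      moreover have "d1 a a' \<le> d2 b b' + 2 * r" using distortion[OF ab ab'] by simp
      moreover have "d2 b b' \<le> d2 b y + d2 y b'" using Metric_space.triangle[OF ms2] assms m by blast
      moreover have "d1 a' x' = d1 x' a'" "d2 y b' = d2 b' y"
        using Metric_space.commute[OF ms1] Metric_space.commute[OF ms2] by auto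
      ultimately show "d1 x x' - 2 * r - d1 x a - d2 b y \<le> d1 x' a' + d2 b' y" by linarith
    qed
    then show "d1 x x' - 2 * r - (INF (a, b)\<in>R. d1 x' a + d2 b y) \<le> d1 x a + d2 b y" by linarith
  qed
  then show ?thesis unfolding glue_dist_def by simp
qed

lemma dist2_le_glue_dist:
  assumes "x \<in> X1" "y \<in> X2" "y' \<in> X2"
  shows "d2 y y' \<le> glue_dist x y + glue_dist x y'"
proof -
  have "d2 y y' - 2 * r - (INF (a, b)\<in>R. d1 x a + d2 b y') \<le> (INF (a, b)\<in>R. d1 x a + d2 b y)"
  proof (rule glue_inf_greatest)
    fix a b assume ab: "(a, b) \<in> R"
    have "d2 y y' - 2 * r - d1 x a - d2 b y \<le> (INF (a, b)\<in>R. d1 x a + d2 b y')"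
    proof (rule glue_inf_greatest)
      fix a' b' assume ab': "(a', b') \<in> R"
      have m: "a \<in> X1" "b \<in> X2" "a' \<in> X1" "b' \<in> X2" using R ab ab' by auto
      have "d2 y y' \<le> d2 y b + d2 b y'" "d2 b y' \<le> d2 b b' + d2 b' y'"
        using Metric_space.triangle[OF ms2] assms m by blast+
      moreover have "d2 b b' \<le> d1 a a' + 2 * r" using distortion[OF ab ab'] by simp
      moreover have "d1 a a' \<le> d1 a x + d1 x a'" using Metric_space.triangle[OF ms1] assms m by blast
      moreover have "d1 a x = d1 x a" "d2 y b = d2 b y"
        using Metric_space.commute[OF ms1] Metric_space.commute[OF ms2] by auto
      ultimately show "d2 y y' - 2 * r - d1 x a - d2 b y \<le> d1 x a' + d2 b' y'" by linarith
    qed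
    then show "d2 y y' - 2 * r - (INF (a, b)\<in>R. d1 x a + d2 b y') \<le> d1 x a + d2 b y" by linarith
  qed
  then show ?thesis unfolding glue_dist_def by simp
qed

definition glue :: "'a + 'b \<Rightarrow> 'a + 'b \<Rightarrow> real" where
  "glue u v = (case (u, v) of
       (Inl x, Inl x') \<Rightarrow> d1 x x' | (Inl x, Inr y) \<Rightarrow> glue_dist x y
     | (Inr y, Inl x) \<Rightarrow> glue_dist x y | (Inr y, Inr y') \<Rightarrow> d2 y y')"

lemma glue_simps [simp]:
  "glue (Inl x) (Inl x') = d1 x x'" "glue (Inl x) (Inr y) = glue_dist x y"
  "glue (Inr y) (Inl x) = glue_dist x y" "glue (Inr y) (Inr y') = d2 y y'"
  by (auto simp: glue_def)

lemma Metric_space_glue: "Metric_space (Inl ` X1 \<union> Inr ` X2) glue"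
proof (rule Metric_space.intro)
  fix u v
  show "0 \<le> glue u v" using Metric_space.nonneg[OF ms1] Metric_space.nonneg[OF ms2] glue_dist_pos
    by (cases u; cases v) (auto intro: less_imp_le)
  show "glue u v = glue v u" using Metric_space.commute[OF ms1] Metric_space.commute[OF ms2]
    by (cases u; cases v) auto
next
  fix u v assume "u \<in> Inl ` X1 \<union> Inr ` X2" "v \<in> Inl ` X1 \<union> Inr ` X2"
  then show "glue u v = 0 \<longleftrightarrow> u = v"
    using Metric_space.zero[OF ms1] Metric_space.zero[OF ms2] glue_dist_pos by (auto simp: less_le)
next
  fix u v w assume "u \<in> Inl ` X1 \<union> Inr ` X2" "v \<in> Inl ` X1 \<union> Inr ` X2" "w \<in> Inl ` X1 \<union> Inr ` X2"
  then show "glue u w \<le> glue u v + glue v w"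
  proof (elim UnE imageE; simp)
    fix x x' x'' assume "x \<in> X1" "x' \<in> X1" "x'' \<in> X1"
    then show "d1 x x'' \<le> d1 x x' + d1 x' x''" using Metric_space.triangle[OF ms1] by blast
  next
    fix y y' y'' assume "y \<in> X2" "y' \<in> X2" "y'' \<in> X2"
    then show "d2 y y'' \<le> d2 y y' + d2 y' y''" using Metric_space.triangle[OF ms2] by blast
  qed (auto intro: dist1_le_glue_dist dist2_le_glue_dist glue_dist_le_left glue_dist_le_left'
      glue_dist_le_right glue_dist_le_right')
qed

lemma glue_dist_related_le: "(x, y) \<in> R \<Longrightarrow> glue_dist x y \<le> r"
  using glue_inf_lower[of x y x y] R Metric_space.zero[OF ms1] Metric_space.zero[OF ms2]
  unfolding glue_dist_def by force

lemma GH_dist_le: "GH_dist X1 d1 X2 d2 \<le> ereal r"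
proof -
  have "GH_dist X1 d1 X2 d2 \<le> hausdorff_dist glue (Inl ` X1) (Inr ` X2)"
    unfolding GH_dist_def using Metric_space_glue by (intro INF_lower) simp
  also have "\<dots> \<le> ereal r"
    unfolding hausdorff_dist_def
  proof (intro max.boundedI SUP_least)
    fix u :: "'a + 'b" assume "u \<in> Inl ` X1"
    then obtain x y where "u = Inl x" "(x, y) \<in> R" using total1 by blast
    then show "(INF v\<in>Inr ` X2. ereal (glue u v)) \<le> ereal r"
      using R glue_dist_related_le by (intro INF_lower2[of "Inr y"]) auto
  next
    fix v :: "'a + 'b" assume "v \<in> Inr ` X2"
    then obtain x y where "v = Inr y" "(x, y) \<in> R" using total2 by blast
    then show "(INF u\<in>Inl ` X1. ereal (glue u v)) \<le> ereal r"
      using R glue_dist_related_le by (intro INF_lower2[of "Inl x"]) auto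
  qed
  finally show ?thesis .
qed

end

lemma isometric_of_exact_correspondence:
  assumes ms1: "Metric_space X1 d1" and ms2: "Metric_space X2 d2"
    and total1: "\<forall>x\<in>X1. \<exists>y\<in>X2. P x y" and total2: "\<forall>y\<in>X2. \<exists>x\<in>X1. P x y"
    and iso: "\<And>x x' y y'. \<lbrakk>x \<in> X1; x' \<in> X1; y \<in> X2; y' \<in> X2; P x y; P x' y'\<rbrakk> \<Longrightarrow> d1 x x' = d2 y y'"
  shows "isometric X1 d1 X2 d2"
proof -
  define f where "f x = (SOME y. y \<in> X2 \<and> P x y)" for x
  have f: "f x \<in> X2" "P x (f x)" if "x \<in> X1" for x
    using someI_ex[OF total1[rule_format, OF that, unfolded Bex_def]] unfolding f_def by auto
  have dist_f: "d2 (f x) (f x') = d1 x x'" if "x \<in> X1" "x' \<in> X1" for x x'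
    using iso[OF that f(1)[OF that(1)] f(1)[OF that(2)] f(2)[OF that(1)] f(2)[OF that(2)]] by simp
  have "inj_on f X1"
  proof (rule inj_onI)
    fix x x' assume x: "x \<in> X1" "x' \<in> X1" and "f x = f x'"
    then have "d1 x x' = 0" using dist_f[OF x] f(1)[OF x(2)] by (simp add: Metric_space.mdist_zero[OF ms2])
    then show "x = x'" using x Metric_space.zero[OF ms1] by blast
  qed
  moreover have "X2 \<subseteq> f ` X1"
  proof
    fix y assume y: "y \<in> X2"
    then obtain x where x: "x \<in> X1" "P x y" using total2 by blast
    then have "d2 (f x) y = d1 x x" using iso[OF x(1) x(1) f(1)[OF x(1)] y f(2)[OF x(1)] x(2)] by simp
    then have "d2 (f x) y = 0" using x(1) Metric_space.mdist_zero[OF ms1] by simp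
    then have "f x = y" using f(1)[OF x(1)] y Metric_space.zero[OF ms2] by blast
    then show "y \<in> f ` X1" using x by blast
  qed
  ultimately have "bij_betw f X1 X2" using f by (auto simp: bij_betw_def)
  then show ?thesis unfolding isometric_def using dist_f by blast
qed

text \<open>A family of functions \<open>f x\<close>, 1-Lipschitz in the compact parameter \<open>x\<close> uniformly on \<open>S\<close>,
  attains every \<open>h\<close> it approximates arbitrarily well: take a limit point of approximants.\<close>
lemma compact_space_attains_uniform_approx:
  assumes ms: "Metric_space X d" and cpt: "compact_space (mtop X d)"
    and lip: "\<And>x x' z. x \<in> X \<Longrightarrow> x' \<in> X \<Longrightarrow> z \<in> S \<Longrightarrow> \<bar>f x z - f x' z\<bar> \<le> d x x'"
    and approx: "\<And>\<eta>. \<eta> > 0 \<Longrightarrow> \<exists>x\<in>X. \<forall>z\<in>S. \<bar>f x z - h z\<bar> \<le> \<eta>"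
  shows "\<exists>x\<in>X. \<forall>z\<in>S. f x z = h z"
proof -
  have "\<forall>n::nat. \<exists>x\<in>X. \<forall>z\<in>S. \<bar>f x z - h z\<bar> \<le> 1 / (real n + 1)"
    using approx by (simp add: add_pos_nonneg)
  then obtain \<sigma> where \<sigma>: "\<And>n. \<sigma> n \<in> X" "\<And>n z. z \<in> S \<Longrightarrow> \<bar>f (\<sigma> n) z - h z\<bar> \<le> 1 / (real n + 1)"
    by metis
  then have "range \<sigma> \<subseteq> X" by auto
  then obtain l r where l: "l \<in> X" "strict_mono r" "limitin (mtop X d) (\<sigma> \<circ> r) l sequentially"
    using cpt Metric_space.compact_space_sequentially[OF ms] by blast
  show ?thesis
  proof (intro bexI[OF _ l(1)] ballI, rule ccontr)
    fix z assume z: "z \<in> S" and ne: "f l z \<noteq> h z"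
    define c where "c = \<bar>f l z - h z\<bar>"
    have c: "c > 0" using ne c_def by simp
    obtain N where N: "inverse (real (Suc N)) < c / 2" using reals_Archimedean[of "c / 2"] c by auto
    have "eventually (\<lambda>n. (\<sigma> \<circ> r) n \<in> X \<and> d ((\<sigma> \<circ> r) n) l < c / 2) sequentially"
      using l(3) c Metric_space.limitin_metric[OF ms] by (metis half_gt_zero)
    then obtain M where M: "\<And>n. n \<ge> M \<Longrightarrow> d (\<sigma> (r n)) l < c / 2"
      unfolding eventually_sequentially by auto
    define n where "n = max M N"
    have "real (Suc N) \<le> real (r n) + 1" using seq_suble[OF l(2), of n] n_def by simp
    then have "1 / (real (r n) + 1) \<le> inverse (real (Suc N))"
      by (simp add: inverse_eq_divide frac_le)
    moreover have "\<bar>f (\<sigma> (r n)) z - h z\<bar> \<le> 1 / (real (r n) + 1)" using \<sigma>(2) z by blast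
    moreover have "\<bar>f l z - f (\<sigma> (r n)) z\<bar> \<le> d l (\<sigma> (r n))" using lip l(1) \<sigma>(1) z by blast
    moreover have "d l (\<sigma> (r n)) < c / 2" using M[of n] n_def Metric_space.commute[OF ms] by simp
    moreover have "c \<le> \<bar>f l z - f (\<sigma> (r n)) z\<bar> + \<bar>f (\<sigma> (r n)) z - h z\<bar>"
      unfolding c_def by linarith
    ultimately show False using N by linarith
  qed
qed

section \<open>Travel time correspondences\<close>

lemma BLIE_dist_le_travel_time_diff:
  assumes ms: "Metric_space X d" and B: "BLIE \<epsilon> X d S"
    and q: "q \<in> X" "q' \<in> X" and b: "0 \<le> b" "b < \<epsilon>"
    and close: "\<forall>w\<in>S. \<bar>d q w - d q' w\<bar> \<le> b"
  shows "d q q' \<le> b"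
proof -
  let ?T = "travel_time_map d S"
  have "inj_on ?T X"
    using B homeomorphic_imp_injective_map Metric_space.topspace_mtopology[OF ms]
    unfolding BLIE_def embedding_map_def by metis
  then have inv: "inv_into X ?T (?T p) = p" if "p \<in> X" for p
    using that by simp
  have sd: "sup_dist S (?T q) (?T q') \<le> b"
    using close b by (intro sup_dist_le) (auto simp: travel_time_map_def)
  have "d (inv_into X ?T (?T q)) (inv_into X ?T (?T q')) = sup_dist S (?T q) (?T q')"
    using B q sd b unfolding BLIE_def local_isometry_def travel_time_data_def by auto
  then show ?thesis using inv q sd by simp
qed

text \<open>Points are related when their travel times to corresponding measurement points
  \<open>\<phi> z\<close> and \<open>\<psi> z\<close> agree up to \<open>\<delta>\<close>; with \<open>\<phi> = id\<close> and \<open>\<psi>\<close> the homeomorphism \<open>S1 \<rightarrow> S2\<close> this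
  compares \<open>r\<^sub>p\<close> with \<open>r\<^sub>q \<circ> \<psi>\<close>, and the swapped roles give the converse relation.\<close>
definition travel_times_close ::
  "('a \<Rightarrow> 'a \<Rightarrow> real) \<Rightarrow> ('b \<Rightarrow> 'b \<Rightarrow> real) \<Rightarrow> ('c \<Rightarrow> 'a) \<Rightarrow> ('c \<Rightarrow> 'b) \<Rightarrow> 'c set \<Rightarrow> real
     \<Rightarrow> 'a \<Rightarrow> 'b \<Rightarrow> bool" where
  "travel_times_close d e \<phi> \<psi> S \<delta> x y \<longleftrightarrow> (\<forall>z\<in>S. \<bar>d x (\<phi> z) - e y (\<psi> z)\<bar> \<le> \<delta>)"

lemma travel_times_close_swap:
  "travel_times_close d e \<phi> \<psi> S \<delta> x y \<Longrightarrow> travel_times_close e d \<psi> \<phi> S \<delta> y x"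
  unfolding travel_times_close_def by (simp add: abs_minus_commute)

lemma travel_times_close_mono:
  "travel_times_close d e \<phi> \<psi> S \<delta> x y \<Longrightarrow> \<delta> \<le> \<delta>' \<Longrightarrow> travel_times_close d e \<phi> \<psi> S \<delta>' x y"
  unfolding travel_times_close_def by force

lemma BLIE_travel_times_close_step:
  assumes msX: "Metric_space X d" and msY: "Metric_space Y e" and B: "BLIE \<epsilon> Y e (\<psi> ` S)"
    and \<phi>: "\<phi> ` S \<subseteq> X" and x: "x \<in> X" "x' \<in> X" and y: "y \<in> Y" "y' \<in> Y"
    and close: "travel_times_close d e \<phi> \<psi> S \<delta> x y" "travel_times_close d e \<phi> \<psi> S \<delta> x' y'"
    and \<delta>: "0 \<le> \<delta>" and small: "d x x' + 2 * \<delta> < \<epsilon>"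
  shows "e y y' \<le> d x x' + 2 * \<delta>"
proof (rule BLIE_dist_le_travel_time_diff[OF msY B y _ small])
  show "0 \<le> d x x' + 2 * \<delta>" using \<delta> Metric_space.nonneg[OF msX] by simp
  show "\<forall>w\<in>\<psi> ` S. \<bar>e y w - e y' w\<bar> \<le> d x x' + 2 * \<delta>"
  proof
    fix w assume "w \<in> \<psi> ` S"
    then obtain z where z: "z \<in> S" "w = \<psi> z" by blast
    then have "\<bar>d x (\<phi> z) - d x' (\<phi> z)\<bar> \<le> d x x'"
      using Metric_space.mdist_reverse_triangle[OF msX x(1) _ x(2)] Metric_space.commute[OF msX] \<phi>
      by fastforce
    moreover have "\<bar>d x (\<phi> z) - e y w\<bar> \<le> \<delta>" "\<bar>d x' (\<phi> z) - e y' w\<bar> \<le> \<delta>"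
      using close z unfolding travel_times_close_def by auto
    ultimately show "\<bar>e y w - e y' w\<bar> \<le> d x x' + 2 * \<delta>" by linarith
  qed
qed

lemma travel_times_close_one_sided_distortion:
  assumes LS: "length_space X d" and msY: "Metric_space Y e" and B: "BLIE \<epsilon> Y e (\<psi> ` S)"
    and \<phi>: "\<phi> ` S \<subseteq> X" and diam: "mdiam X d < ereal D"
    and \<epsilon>: "\<epsilon> > 0" and \<delta>: "0 \<le> \<delta>" "4 * \<delta> \<le> \<epsilon>"
    and total: "\<forall>x\<in>X. \<exists>y\<in>Y. travel_times_close d e \<phi> \<psi> S \<delta> x y"
    and x: "x \<in> X" "x' \<in> X" and y: "y \<in> Y" "y' \<in> Y"
    and close: "travel_times_close d e \<phi> \<psi> S \<delta> x y" "travel_times_close d e \<phi> \<psi> S \<delta> x' y'"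
  shows "e y y' \<le> d x x' + (2 * D / \<epsilon> + 1) * (2 * \<delta>)"
proof -
  have msX: "Metric_space X d" using LS length_space_def by blast
  obtain n where n: "d x x' < real n * (\<epsilon> / 2)" "real n \<le> D / (\<epsilon> / 2) + 1"
    using ex_nat_multiple_greater[of "d x x'" D "\<epsilon> / 2"] Metric_space.nonneg[OF msX]
      mdiam_less_imp_dist_less[OF x diam] \<epsilon> by auto
  have "e y y' \<le> d x x' + real n * (2 * \<delta>)"
  proof (rule length_space_chain_bound[OF LS msY total _ _ _ x y close n(1)])
    fix x y x' y'
    assume "x \<in> X" "x' \<in> X" "y \<in> Y" "y' \<in> Y" "travel_times_close d e \<phi> \<psi> S \<delta> x y"
      "travel_times_close d e \<phi> \<psi> S \<delta> x' y'" "d x x' < \<epsilon> / 2"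
    then show "e y y' \<le> d x x' + 2 * \<delta>"
      using BLIE_travel_times_close_step[OF msX msY B \<phi>] \<delta> by simp
  qed (use \<epsilon> \<delta> in auto)
  also have "real n * (2 * \<delta>) \<le> (2 * D / \<epsilon> + 1) * (2 * \<delta>)"
    using n(2) \<delta> by (intro mult_right_mono) (auto simp: field_simps)
  finally show ?thesis by simp
qed

locale BLIE_pair =
  fixes X1 :: "'a set" and d1 :: "'a \<Rightarrow> 'a \<Rightarrow> real" and S1 :: "'a set"
    and X2 :: "'b set" and d2 :: "'b \<Rightarrow> 'b \<Rightarrow> real" and S2 :: "'b set" and \<epsilon> D :: real
  assumes eps_pos: "\<epsilon> > 0" and D_pos: "D > 0"
    and length1: "length_space X1 d1" and length2: "length_space X2 d2"
    and S1_subset: "S1 \<subseteq> X1" and S2_subset: "S2 \<subseteq> X2"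
    and diam1: "mdiam X1 d1 < ereal D" and diam2: "mdiam X2 d2 < ereal D"
    and BLIE1: "BLIE \<epsilon> X1 d1 S1" and BLIE2: "BLIE \<epsilon> X2 d2 S2"
begin

lemma ms1: "Metric_space X1 d1"
  using length1 length_space_def by blast

lemma ms2: "Metric_space X2 d2"
  using length2 length_space_def by blast

abbreviation (input) close :: "('a \<Rightarrow> 'b) \<Rightarrow> real \<Rightarrow> 'a \<Rightarrow> 'b \<Rightarrow> bool" where
  "close \<psi> \<delta> \<equiv> travel_times_close d1 d2 id \<psi> S1 \<delta>"

abbreviation (input) hausdorff_data :: "('a \<Rightarrow> 'b) \<Rightarrow> ereal" where
  "hausdorff_data \<psi> \<equiv>
     hausdorff_dist (sup_dist S1) (travel_time_data X1 d1 S1) (travel_time_data_phi X2 d2 S1 \<psi>)"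

lemma close_of_sup_dist_less:
  assumes "\<psi> ` S1 \<subseteq> X2" "p \<in> X1" "q \<in> X2"
    and "sup_dist S1 (travel_time_map d1 S1 p) (restrict (\<lambda>z. d2 q (\<psi> z)) S1) < \<delta>"
  shows "close \<psi> \<delta> p q" and "\<delta> > 0"
proof -
  have "\<bar>d1 p z - d2 q (\<psi> z)\<bar> \<le> D" if "z \<in> S1" for z
    using mdiam_less_imp_dist_less[OF assms(2) _ diam1, of z] mdiam_less_imp_dist_less[OF assms(3) _ diam2]
      Metric_space.nonneg[OF ms1, of p z] Metric_space.nonneg[OF ms2, of q "\<psi> z"] that assms(1) S1_subset
    by fastforce
  then have "bdd_above ((\<lambda>z. \<bar>travel_time_map d1 S1 p z - restrict (\<lambda>z. d2 q (\<psi> z)) S1 z\<bar>) ` S1)"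
    by (intro bdd_aboveI2[of _ _ D]) (simp add: travel_time_map_def)
  from sup_dist_less_imp[OF this assms(4)]
  show "close \<psi> \<delta> p q" and "\<delta> > 0"
    by (simp_all add: travel_times_close_def travel_time_map_def)
qed

lemma close_of_hausdorff_less:
  assumes \<psi>: "\<psi> ` S1 \<subseteq> X2" and H: "hausdorff_data \<psi> < ereal \<delta>"
  shows "\<forall>p\<in>X1. \<exists>q\<in>X2. close \<psi> \<delta> p q"
    and "\<forall>q\<in>X2. \<exists>p\<in>X1. close \<psi> \<delta> p q"
    and "X1 \<noteq> {} \<Longrightarrow> \<delta> > 0"
proof -
  have left: "\<exists>q\<in>X2. close \<psi> \<delta> p q \<and> \<delta> > 0" if p: "p \<in> X1" for p
    using hausdorff_dist_less_imp_left[OF H, of "travel_time_map d1 S1 p"] close_of_sup_dist_less[OF \<psi> p]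
    unfolding travel_time_data_def travel_time_data_phi_def using p by blast
  then show "\<forall>p\<in>X1. \<exists>q\<in>X2. close \<psi> \<delta> p q" and "X1 \<noteq> {} \<Longrightarrow> \<delta> > 0" by blast+
  show "\<forall>q\<in>X2. \<exists>p\<in>X1. close \<psi> \<delta> p q"
  proof
    fix q assume q: "q \<in> X2"
    then show "\<exists>p\<in>X1. close \<psi> \<delta> p q"
      using hausdorff_dist_less_imp_right[OF H, of "restrict (\<lambda>z. d2 q (\<psi> z)) S1"]
        close_of_sup_dist_less(1)[OF \<psi> _ q]
      unfolding travel_time_data_def travel_time_data_phi_def by blast
  qed
qed

text \<open>For \<open>4 \<delta> > \<epsilon>\<close> the bound already exceeds the diameter.\<close>
lemma close_distortion:
  assumes \<psi>: "\<psi> ` S1 = S2" and \<delta>: "0 \<le> \<delta>"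
    and total1: "\<forall>p\<in>X1. \<exists>q\<in>X2. close \<psi> \<delta> p q" and total2: "\<forall>q\<in>X2. \<exists>p\<in>X1. close \<psi> \<delta> p q"
    and p: "p \<in> X1" "p' \<in> X1" and q: "q \<in> X2" "q' \<in> X2"
    and close: "close \<psi> \<delta> p q" "close \<psi> \<delta> p' q'"
  shows "\<bar>d1 p p' - d2 q q'\<bar> \<le> 2 * (2 * D / \<epsilon> + 1) * \<delta>"
proof (cases "4 * \<delta> \<le> \<epsilon>")
  case True
  have "d2 q q' \<le> d1 p p' + (2 * D / \<epsilon> + 1) * (2 * \<delta>)"
    using travel_times_close_one_sided_distortion[OF length1 ms2 _ _ diam1 eps_pos \<delta> True total1 p q close]
      BLIE2 S1_subset \<psi> by simp
  moreover have "d1 p p' \<le> d2 q q' + (2 * D / \<epsilon> + 1) * (2 * \<delta>)"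
  proof (rule travel_times_close_one_sided_distortion[OF length2 ms1 _ _ diam2 eps_pos \<delta> True _ q p])
    show "BLIE \<epsilon> X1 d1 (id ` S1)" using BLIE1 by simp
    show "\<psi> ` S1 \<subseteq> X2" using \<psi> S2_subset by simp
    show "\<forall>q\<in>X2. \<exists>p\<in>X1. travel_times_close d2 d1 \<psi> id S1 \<delta> q p"
      using total2 by (blast intro: travel_times_close_swap)
  qed (fact close[THEN travel_times_close_swap])+
  moreover have "(2 * D / \<epsilon> + 1) * (2 * \<delta>) = 2 * (2 * D / \<epsilon> + 1) * \<delta>" by simp
  ultimately show ?thesis unfolding abs_le_iff by linarith
next
  case False
  have "D \<le> D * (4 * \<delta>) / \<epsilon>" using False eps_pos D_pos by (simp add: le_divide_eq)
  also have "\<dots> \<le> 2 * (2 * D / \<epsilon> + 1) * \<delta>" using eps_pos \<delta> by (simp add: field_simps)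
  finally show ?thesis
    using mdiam_less_imp_dist_less[OF p diam1] mdiam_less_imp_dist_less[OF q diam2]
      Metric_space.nonneg[OF ms1, of p p'] Metric_space.nonneg[OF ms2, of q q'] by linarith
qed

lemma GH_dist_le_of_hausdorff_less:
  assumes \<psi>: "\<psi> ` S1 = S2" and H: "hausdorff_data \<psi> < ereal \<delta>"
  shows "GH_dist X1 d1 X2 d2 \<le> ereal ((2 * D / \<epsilon> + 1) * \<delta>)"
proof (cases "X1 = {}")
  case True
  then have "X2 = {}" using close_of_hausdorff_less(2)[OF _ H] \<psi> S2_subset by auto
  then have "Metric_space (Inl ` X1 \<union> Inr ` X2) (\<lambda>_ _. 0)" using True by unfold_locales auto
  then have "GH_dist X1 d1 X2 d2 \<le> hausdorff_dist (\<lambda>_ _. 0) (Inl ` X1) (Inr ` X2)"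
    unfolding GH_dist_def using True \<open>X2 = {}\<close> by (intro INF_lower) auto
  also have "\<dots> = -\<infinity>" using True \<open>X2 = {}\<close> by (simp add: hausdorff_dist_def bot_ereal_def)
  finally show ?thesis by simp
next
  case False
  note total = close_of_hausdorff_less[OF _ H, unfolded \<psi>, OF S2_subset]
  have \<delta>: "\<delta> > 0" using total(3) False .
  interpret correspondence X1 d1 X2 d2 "{(p, q). p \<in> X1 \<and> q \<in> X2 \<and> close \<psi> \<delta> p q}"
    "(2 * D / \<epsilon> + 1) * \<delta>"
  proof (rule correspondence.intro)
    show "0 < (2 * D / \<epsilon> + 1) * \<delta>" using \<delta> eps_pos D_pos by (simp add: add_pos_nonneg)
    fix p q p' q' assume "(p, q) \<in> {(p, q). p \<in> X1 \<and> q \<in> X2 \<and> close \<psi> \<delta> p q}"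
      "(p', q') \<in> {(p, q). p \<in> X1 \<and> q \<in> X2 \<and> close \<psi> \<delta> p q}"
    then have "\<bar>d1 p p' - d2 q q'\<bar> \<le> 2 * (2 * D / \<epsilon> + 1) * \<delta>"
      using close_distortion[OF \<psi> less_imp_le[OF \<delta>] total(1,2)] by auto
    then show "\<bar>d1 p p' - d2 q q'\<bar> \<le> 2 * ((2 * D / \<epsilon> + 1) * \<delta>)"
      by (simp only: mult.assoc)
  qed (use ms1 ms2 total False in auto)
  show ?thesis by (rule GH_dist_le)
qed

lemma close_total_of_hausdorff_zero:
  assumes cpt1: "compact_space (mtop X1 d1)" and cpt2: "compact_space (mtop X2 d2)"
    and \<psi>: "\<psi> ` S1 \<subseteq> X2" and H0: "hausdorff_data \<psi> = 0"
  shows "\<forall>p\<in>X1. \<exists>q\<in>X2. close \<psi> 0 p q" and "\<forall>q\<in>X2. \<exists>p\<in>X1. close \<psi> 0 p q"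
proof -
  have total: "\<forall>p\<in>X1. \<exists>q\<in>X2. close \<psi> \<delta> p q" "\<forall>q\<in>X2. \<exists>p\<in>X1. close \<psi> \<delta> p q" if "\<delta> > 0" for \<delta>
    using close_of_hausdorff_less[OF \<psi>] H0 that by simp_all
  show "\<forall>p\<in>X1. \<exists>q\<in>X2. close \<psi> 0 p q"
  proof
    fix p assume p: "p \<in> X1"
    have "\<exists>q\<in>X2. \<forall>z\<in>S1. d2 q (\<psi> z) = d1 p z"
    proof (rule compact_space_attains_uniform_approx[OF ms2 cpt2])
      show "\<bar>d2 q (\<psi> z) - d2 q' (\<psi> z)\<bar> \<le> d2 q q'" if "q \<in> X2" "q' \<in> X2" "z \<in> S1" for q q' z
        using Metric_space.mdist_reverse_triangle[OF ms2 that(1) _ that(2)] Metric_space.commute[OF ms2]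
          \<psi> that(3) by fastforce
      show "\<exists>q\<in>X2. \<forall>z\<in>S1. \<bar>d2 q (\<psi> z) - d1 p z\<bar> \<le> \<eta>" if "\<eta> > 0" for \<eta>
        using total(1)[OF that] p by (auto simp: travel_times_close_def abs_minus_commute)
    qed
    then obtain q where "q \<in> X2" "\<forall>z\<in>S1. d2 q (\<psi> z) = d1 p z" by blast
    then show "\<exists>q\<in>X2. close \<psi> 0 p q" unfolding travel_times_close_def by (intro bexI[of _ q]) auto
  qed
  show "\<forall>q\<in>X2. \<exists>p\<in>X1. close \<psi> 0 p q"
  proof
    fix q assume q: "q \<in> X2"
    have "\<exists>p\<in>X1. \<forall>z\<in>S1. d1 p z = d2 q (\<psi> z)"
    proof (rule compact_space_attains_uniform_approx[OF ms1 cpt1])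
      show "\<bar>d1 p z - d1 p' z\<bar> \<le> d1 p p'" if "p \<in> X1" "p' \<in> X1" "z \<in> S1" for p p' z
        using Metric_space.mdist_reverse_triangle[OF ms1 that(1) _ that(2)] Metric_space.commute[OF ms1]
          S1_subset that(3) by fastforce
      show "\<exists>p\<in>X1. \<forall>z\<in>S1. \<bar>d1 p z - d2 q (\<psi> z)\<bar> \<le> \<eta>" if "\<eta> > 0" for \<eta>
        using total(2)[OF that] q by (auto simp: travel_times_close_def)
    qed
    then show "\<exists>p\<in>X1. close \<psi> 0 p q" by (auto simp: travel_times_close_def)
  qed
qed

lemma close_zero_dist_eq:
  assumes \<psi>: "\<psi> ` S1 = S2" and H0: "hausdorff_data \<psi> = 0"
    and p: "p \<in> X1" "p' \<in> X1" and q: "q \<in> X2" "q' \<in> X2"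
    and close: "close \<psi> 0 p q" "close \<psi> 0 p' q'"
  shows "d1 p p' = d2 q q'"
proof -
  define K where "K = 2 * (2 * D / \<epsilon> + 1)"
  have K: "K > 0" using eps_pos D_pos by (simp add: K_def add_pos_nonneg)
  have "\<bar>d1 p p' - d2 q q'\<bar> \<le> 0"
  proof (rule field_le_epsilon)
    fix e :: real assume "e > 0"
    then have \<delta>: "e / K > 0" using K by simp
    have "\<bar>d1 p p' - d2 q q'\<bar> \<le> 2 * (2 * D / \<epsilon> + 1) * (e / K)"
    proof (rule close_distortion[OF \<psi> less_imp_le[OF \<delta>] _ _ p q])
      show "close \<psi> (e / K) p q" "close \<psi> (e / K) p' q'"
        using travel_times_close_mono[OF close(1)] travel_times_close_mono[OF close(2)] \<delta> by simp_all
    qed (use close_of_hausdorff_less[of \<psi> "e / K"] \<psi> S2_subset H0 \<delta> in auto)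
    also have "\<dots> = e" using K by (simp add: K_def)
    finally show "\<bar>d1 p p' - d2 q q'\<bar> \<le> 0 + e" by simp
  qed
  then show ?thesis by simp
qed

lemma isometric_of_hausdorff_zero:
  assumes "compact_space (mtop X1 d1)" "compact_space (mtop X2 d2)"
    and \<psi>: "\<psi> ` S1 = S2" and H0: "hausdorff_data \<psi> = 0"
  shows "isometric X1 d1 X2 d2"
  using isometric_of_exact_correspondence[OF ms1 ms2]
    close_total_of_hausdorff_zero[OF assms(1,2) _ H0] close_zero_dist_eq[OF \<psi> H0] \<psi> S2_subset
  by blast

end

theorem mainTheorem1:
  fixes X1 :: "'a set" and d1 :: "'a \<Rightarrow> 'a \<Rightarrow> real" and S1 :: "'a set"
    and X2 :: "'b set" and d2 :: "'b \<Rightarrow> 'b \<Rightarrow> real" and S2 :: "'b set"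
    and \<phi> :: "'a \<Rightarrow> 'b" and \<epsilon> D :: real
  assumes "\<epsilon> > 0" and "D > 0"
    and "length_space X1 d1" and "compact_space (mtop X1 d1)" and "closedin (mtop X1 d1) S1"
    and "length_space X2 d2" and "compact_space (mtop X2 d2)" and "closedin (mtop X2 d2) S2"
    and "mdiam X1 d1 < ereal D" and "mdiam X2 d2 < ereal D"
    and "BLIE \<epsilon> X1 d1 S1" and "BLIE \<epsilon> X2 d2 S2"
    and "homeomorphic_map (subtopology (mtop X1 d1) S1) (subtopology (mtop X2 d2) S2) \<phi>"
  shows "GH_dist X1 d1 X2 d2 \<le>
           ereal (2 * D / \<epsilon> + 1) *
             hausdorff_dist (sup_dist S1) (travel_time_data X1 d1 S1)
               (travel_time_data_phi X2 d2 S1 \<phi>)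
         \<and> ((\<exists>\<psi>. homeomorphic_map (subtopology (mtop X1 d1) S1) (subtopology (mtop X2 d2) S2) \<psi>
              \<and> hausdorff_dist (sup_dist S1) (travel_time_data X1 d1 S1)
                  (travel_time_data_phi X2 d2 S1 \<psi>) = 0)
         \<longrightarrow> isometric X1 d1 X2 d2)"
proof -
  have top1: "topspace (mtop X1 d1) = X1" and top2: "topspace (mtop X2 d2) = X2"
    using assms(3,6) Metric_space.topspace_mtopology by (auto simp: length_space_def)
  have S: "S1 \<subseteq> X1" "S2 \<subseteq> X2" using closedin_subset assms(5,8) top1 top2 by metis+
  interpret BLIE_pair X1 d1 S1 X2 d2 S2 \<epsilon> D
    using assms S by unfold_locales
  have image: "\<psi> ` S1 = S2"
    if "homeomorphic_map (subtopology (mtop X1 d1) S1) (subtopology (mtop X2 d2) S2) \<psi>" for \<psi>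
    using homeomorphic_imp_surjective_map[OF that] S by (simp add: top1 top2 Int_absorb1)
  have "GH_dist X1 d1 X2 d2 \<le> ereal (2 * D / \<epsilon> + 1) * hausdorff_data \<phi>"
    using GH_dist_le_of_hausdorff_less[OF image[OF assms(13)]] assms(1,2)
    by (intro ereal_le_mult_if_le_all_greater) (auto simp: add_pos_nonneg)
  moreover have "isometric X1 d1 X2 d2"
    if "homeomorphic_map (subtopology (mtop X1 d1) S1) (subtopology (mtop X2 d2) S2) \<psi>"
      and "hausdorff_data \<psi> = 0" for \<psi>
    using isometric_of_hausdorff_zero[OF assms(4,7) image] that by blast
  ultimately show ?thesis by blast
qed

end
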